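(* During any execution of the Iterated Relaxation Procedure (described in the context), whenever the current matroid $\mathcal M'$ is contracted by an edge $e$, the singleton $\{e\}$ is independent in $\mathcal M'$ (i.e. $e$ is not a loop of $\mathcal M'$).
   Context: Setting: a hypergraph $G=(V,E)$ with every hyperedge having at most $k$ endpoints, capacities $b_v\ge0$, demands $d_{v,e}\ge0$ for each hyperedge $e$ and endpoint $v\in e$, profits $p_e\ge0$, and a matroid $\mathcal M=(E,\mathcal I)$ given by an independence oracle. For $W\subseteq V$, $F\subseteq E$, a matroid $\mathcal M'$ on ground set $F$ with rank function $r_{\mathcal M'}$, and values $b'_v$ ($v\in W$), let $LP[W,F,\mathcal M',b']$ be $\max\{\sum_{e\in F}p_ex_e: \sum_{e\in\delta_F(v)}d_{v,e}x_e\le b'_v\ \forall v\in W,\ x(A)\le r_{\mathcal M'}(A)\ \forall A\subseteq F,\ x\ge0\}$, where $\delta_F(v)$ is the set of edges of $F$ containing $v$. For $e\in F$, $\mathcal M'-e$ is the deletion and, when $\{e\}$ is independent, $\mathcal M'/e$ is the contraction ($A$ independent in $\mathcal M'/e$ iff $A\cup\{e\}$ independent in $\mathcal M'$). Iterated Relaxation Procedure: start with $W=V$, $F=E$, $\mathcal M'=\mathcal M$, $b'_v=b_v$, $M'=\emptyset$. While $F\neq\emptyset$: compute an optimal extreme point $x^*$ of $LP[W,F,\mathcal M',b']$; if $x^*_e=0$ for some $e\in F$, set $F\leftarrow F-\{e\}$, $\mathcal M'\leftarrow\mathcal M'-e$; else if $x^*_e=1$ for some $e\in F$, set $F\leftarrow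 F-\{e\}$, $\mathcal M'\leftarrow\mathcal M'/e$, $M'\leftarrow M'\cup\{e\}$ and $b'_v\leftarrow b'_v-d_{v,e}$ for each endpoint $v$ of $e$; otherwise remove from $W$ a vertex $v\in W$ minimizing $|\delta_F(v)|-x^*(\delta_F(v))$. Return $M'$. *)

theory Defs
  imports Complex_Main
begin

definition matroid :: "'e set \<Rightarrow> ('e set \<Rightarrow> bool) \<Rightarrow> bool" where
  "matroid G I \<longleftrightarrow> finite G
     \<and> (\<forall>A. I A \<longrightarrow> A \<subseteq> G)
     \<and> I {}
     \<and> (\<forall>A B. I B \<and> A \<subseteq> B \<longrightarrow> I A)
     \<and> (\<forall>A B. I A \<and> I B \<and> card A < card B \<longrightarrow> (\<exists>x\<in>B - A. I (insert x A)))"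

definition mrank :: "('e set \<Rightarrow> bool) \<Rightarrow> 'e set \<Rightarrow> nat" where
  "mrank I A = Max (card ` {B. B \<subseteq> A \<and> I B})"

definition mdelete :: "('e set \<Rightarrow> bool) \<Rightarrow> 'e \<Rightarrow> ('e set \<Rightarrow> bool)" where
  "mdelete I e = (\<lambda>A. I A \<and> e \<notin> A)"

definition mcontract :: "('e set \<Rightarrow> bool) \<Rightarrow> 'e \<Rightarrow> ('e set \<Rightarrow> bool)" where
  "mcontract I e = (\<lambda>A. e \<notin> A \<and> I (insert e A))"

text \<open>Hyperedges are abstract elements; ends e is the set of endpoints of e.
  Points of the LP are functions x :: 'e => real vanishing outside F.\<close>

definition delta :: "('e \<Rightarrow> 'v set) \<Rightarrow> 'e set \<Rightarrow> 'v \<Rightarrow> 'e set" where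
  "delta ends F v = {e \<in> F. v \<in> ends e}"

definition lp_feasible ::
  "('e \<Rightarrow> 'v set) \<Rightarrow> ('v \<Rightarrow> 'e \<Rightarrow> real) \<Rightarrow> 'v set \<Rightarrow> 'e set \<Rightarrow> ('e set \<Rightarrow> bool)
   \<Rightarrow> ('v \<Rightarrow> real) \<Rightarrow> ('e \<Rightarrow> real) \<Rightarrow> bool" where
  "lp_feasible ends d W F I b' x \<longleftrightarrow>
     (\<forall>e. e \<notin> F \<longrightarrow> x e = 0)
     \<and> (\<forall>e\<in>F. 0 \<le> x e)
     \<and> (\<forall>v\<in>W. (\<Sum>e\<in>delta ends F v. d v e * x e) \<le> b' v)
     \<and> (\<forall>A. A \<subseteq> F \<longrightarrow> sum x A \<le> real (mrank I A))"

definition lp_extreme ::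
  "('e \<Rightarrow> 'v set) \<Rightarrow> ('v \<Rightarrow> 'e \<Rightarrow> real) \<Rightarrow> 'v set \<Rightarrow> 'e set \<Rightarrow> ('e set \<Rightarrow> bool)
   \<Rightarrow> ('v \<Rightarrow> real) \<Rightarrow> ('e \<Rightarrow> real) \<Rightarrow> bool" where
  "lp_extreme ends d W F I b' x \<longleftrightarrow>
     lp_feasible ends d W F I b' x
     \<and> \<not> (\<exists>y z t. lp_feasible ends d W F I b' y \<and> lp_feasible ends d W F I b' z
              \<and> y \<noteq> z \<and> 0 < t \<and> t < 1 \<and> x = (\<lambda>e. t * y e + (1 - t) * z e))"

definition lp_opt_extreme ::
  "('e \<Rightarrow> 'v set) \<Rightarrow> ('v \<Rightarrow> 'e \<Rightarrow> real) \<Rightarrow> ('e \<Rightarrow> real) \<Rightarrow> 'v set \<Rightarrow> 'e set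
   \<Rightarrow> ('e set \<Rightarrow> bool) \<Rightarrow> ('v \<Rightarrow> real) \<Rightarrow> ('e \<Rightarrow> real) \<Rightarrow> bool" where
  "lp_opt_extreme ends d p W F I b' x \<longleftrightarrow>
     lp_extreme ends d W F I b' x
     \<and> (\<forall>y. lp_feasible ends d W F I b' y \<longrightarrow>
            (\<Sum>e\<in>F. p e * y e) \<le> (\<Sum>e\<in>F. p e * x e))"

text \<open>State: (W, F, M' (independence predicate on F), b', M').\<close>
type_synonym ('v, 'e) irstate =
  "'v set \<times> 'e set \<times> ('e set \<Rightarrow> bool) \<times> ('v \<Rightarrow> real) \<times> 'e set"

inductive ir_step ::
  "('e \<Rightarrow> 'v set) \<Rightarrow> ('v \<Rightarrow> 'e \<Rightarrow> real) \<Rightarrow> ('e \<Rightarrow> real)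
   \<Rightarrow> ('v, 'e) irstate \<Rightarrow> ('v, 'e) irstate \<Rightarrow> bool"
  for ends d p where
  delete_step:
    "\<lbrakk> F \<noteq> {}; lp_opt_extreme ends d p W F I b' x; e \<in> F; x e = 0 \<rbrakk>
     \<Longrightarrow> ir_step ends d p (W, F, I, b', M) (W, F - {e}, mdelete I e, b', M)"
| contract_step:
    "\<lbrakk> F \<noteq> {}; lp_opt_extreme ends d p W F I b' x; \<forall>f\<in>F. x f \<noteq> 0; e \<in> F; x e = 1 \<rbrakk>
     \<Longrightarrow> ir_step ends d p (W, F, I, b', M)
           (W, F - {e}, mcontract I e, (\<lambda>v. if v \<in> ends e then b' v - d v e else b' v),
            insert e M)"
| remove_step:
    "\<lbrakk> F \<noteq> {}; lp_opt_extreme ends d p W F I b' x; \<forall>f\<in>F. x f \<noteq> 0 \<and> x f \<noteq> 1;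
       v \<in> W;
       \<forall>u\<in>W. real (card (delta ends F v)) - sum x (delta ends F v)
               \<le> real (card (delta ends F u)) - sum x (delta ends F u) \<rbrakk>
     \<Longrightarrow> ir_step ends d p (W, F, I, b', M) (W - {v}, F, I, b', M)"

end

theory Submission
  imports Defs
begin

text \<open>A feasible point with \<open>x e = 1\<close> satisfies \<open>1 = x({e}) \<le> r({e})\<close>, so \<open>e\<close> is not a loop
  of the current matroid, provided its rank is well defined. The latter only needs the empty
  set to be independent, and this is preserved by every step of the procedure: deletion keeps
  \<open>{}\<close>, and contraction by \<open>e\<close> makes \<open>{}\<close> independent exactly when \<open>{e}\<close> was, which is
  the first observation once more.\<close>

lemma mrank_attained:
  assumes "I {}" and "finite A"
  obtains B where "B \<subseteq> A" and "I B" and "card B = mrank I A"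
proof -
  let ?S = "card ` {B. B \<subseteq> A \<and> I B}"
  have "finite ?S" using assms(2) by simp
  moreover have "?S \<noteq> {}" using assms(1) by auto
  ultimately have "Max ?S \<in> ?S" by (rule Max_in)
  then obtain B where "B \<subseteq> A" "I B" "card B = Max ?S" by auto
  with that show ?thesis by (simp add: mrank_def)
qed

lemma indep_singleton_if_mrank_pos:
  assumes "I {}" and "0 < mrank I {e}"
  shows "I {e}"
proof -
  obtain B where "B \<subseteq> {e}" "I B" "card B = mrank I {e}"
    using mrank_attained[where I = I and A = "{e}"] assms(1) by blast
  moreover from this assms(2) have "B \<noteq> {}" by auto
  ultimately show ?thesis by (auto dest: subset_singletonD)
qed

lemma lp_feasible_one_imp_indep_singleton:
  assumes "I {}" and "lp_feasible ends d W F I b' x" and "e \<in> F" and "x e = 1"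
  shows "I {e}"
proof -
  have "{e} \<subseteq> F" using assms(3) by simp
  with assms(2) have "sum x {e} \<le> real (mrank I {e})"
    unfolding lp_feasible_def by blast
  with assms(4) have "0 < mrank I {e}" by simp
  with assms(1) show ?thesis by (rule indep_singleton_if_mrank_pos)
qed

lemma lp_opt_extreme_one_imp_indep_singleton:
  assumes "I {}" and "lp_opt_extreme ends d p W F I b' x" and "e \<in> F" and "x e = 1"
  shows "I {e}"
proof -
  have "lp_feasible ends d W F I b' x"
    using assms(2) unfolding lp_opt_extreme_def lp_extreme_def by blast
  with assms(1,3,4) show ?thesis
    using lp_feasible_one_imp_indep_singleton[where I = I and x = x and e = e] by blast
qed

lemma ir_step_preserves_indep_empty:
  assumes "ir_step ends d p (W, F, I, b', M) (W2, F2, I2, b2, M2)" and "I {}"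
  shows "I2 {}"
  using assms(1)
proof cases
  case (delete_step x e)
  thus ?thesis using assms(2) by (simp add: mdelete_def)
next
  case (contract_step x e)
  thus ?thesis using lp_opt_extreme_one_imp_indep_singleton[of I] assms(2)
    by (simp add: mcontract_def)
next
  case (remove_step x v)
  thus ?thesis using assms(2) by simp
qed

lemma ir_steps_preserve_indep_empty:
  assumes "(ir_step ends d p)\<^sup>*\<^sup>* (W, F, I, b', M) (W2, F2, I2, b2, M2)" and "I {}"
  shows "I2 {}"
  using assms(1)
proof (induction "(W2, F2, I2, b2, M2)" arbitrary: W2 F2 I2 b2 M2 rule: rtranclp_induct)
  case base
  thus ?case using assms(2) by simp
next
  case (step s)
  obtain W1 F1 I1 b1 M1 where "s = (W1, F1, I1, b1, M1)" by (cases s)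
  with step have "I1 {}" and "ir_step ends d p (W1, F1, I1, b1, M1) (W2, F2, I2, b2, M2)"
    by simp_all
  thus ?case by (rule ir_step_preserves_indep_empty[rotated])
qed

theorem lemma1:
  fixes V :: "'v set" and E :: "'e set" and ends :: "'e \<Rightarrow> 'v set" and k :: nat
    and b :: "'v \<Rightarrow> real" and d :: "'v \<Rightarrow> 'e \<Rightarrow> real" and p :: "'e \<Rightarrow> real"
    and I :: "'e set \<Rightarrow> bool"
  assumes "finite V" and "finite E"
    and "\<forall>e\<in>E. ends e \<subseteq> V \<and> card (ends e) \<le> k"
    and "\<forall>v\<in>V. 0 \<le> b v"
    and "\<forall>e\<in>E. \<forall>v\<in>ends e. 0 \<le> d v e"
    and "\<forall>e\<in>E. 0 \<le> p e"
    and "matroid E I"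
    and "(ir_step ends d p)\<^sup>*\<^sup>* (V, E, I, b, {}) (W, F, I', b', M')"
    and "F \<noteq> {}"
    and "lp_opt_extreme ends d p W F I' b' x"
    and "\<forall>f\<in>F. x f \<noteq> 0"
    and "e \<in> F" and "x e = 1"
  shows "I' {e}"
proof -
  have "I {}" using assms(7) unfolding matroid_def by blast
  hence "I' {}" using assms(8) by (rule ir_steps_preserve_indep_empty[rotated])
  thus ?thesis using assms(10,12,13) by (rule lp_opt_extreme_one_imp_indep_singleton)
qed

end
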